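(* Let $S_0,S_1,\ldots,S_m,F$ be propositional formulae. If $[S_1,\ldots,S_m,F] \equiv [S_1,\ldots,S_m]$, then $[S_0,S_1,\ldots,S_m,F] \equiv [S_0,S_1,\ldots,S_m]$.
   Context: Models are truth assignments. For a formula $G$: $I \leq_G J$ iff $I \models G$ or $J \not\models G$. For a sequence $S=[S_1,\ldots,S_m]$: $I \leq_S J$ iff either $S=[]$, or ($I \leq_{S_1} J$ and (either $J \not\leq_{S_1} I$ or $I \leq_R J$)), where $R=[S_2,\ldots,S_m]$. For sequences, $S\equiv R$ means $I \leq_S J$ and $I\leq_R J$ coincide for all pairs of models $I,J$. *)

theory Defs
  imports Main
begin

datatype 'v form =
    Atom 'v
  | Bot
  | Top
  | Neg "'v form"
  | And "'v form" "'v form"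
  | Or "'v form" "'v form"
  | Imp "'v form" "'v form"

type_synonym 'v model = "'v \<Rightarrow> bool"

fun models :: "'v model \<Rightarrow> 'v form \<Rightarrow> bool" where
  "models I (Atom x) = I x"
| "models I Bot = False"
| "models I Top = True"
| "models I (Neg f) = (\<not> models I f)"
| "models I (And f g) = (models I f \<and> models I g)"
| "models I (Or f g) = (models I f \<or> models I g)"
| "models I (Imp f g) = (models I f \<longrightarrow> models I g)"

definition le_form :: "'v form \<Rightarrow> 'v model \<Rightarrow> 'v model \<Rightarrow> bool" where
  "le_form G I J \<longleftrightarrow> models I G \<or> \<not> models J G"

fun le_seq :: "'v form list \<Rightarrow> 'v model \<Rightarrow> 'v model \<Rightarrow> bool" where
  "le_seq [] I J = True"
| "le_seq (S1 # R) I J =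
     (le_form S1 I J \<and> (\<not> le_form S1 J I \<or> le_seq R I J))"

definition seq_equiv :: "'v form list \<Rightarrow> 'v form list \<Rightarrow> bool" where
  "seq_equiv S R \<longleftrightarrow> (\<forall>I J. le_seq S I J = le_seq R I J)"

end

theory Submission
  imports Defs
begin

lemma seq_equiv_Cons:
  assumes "seq_equiv R R'"
  shows "seq_equiv (S # R) (S # R')"
  using assms unfolding seq_equiv_def by simp

theorem theorem6:
  fixes S0 F :: "'v form" and Ss :: "'v form list"
  assumes "seq_equiv (Ss @ [F]) Ss"
  shows "seq_equiv (S0 # Ss @ [F]) (S0 # Ss)"
  using assms by (rule seq_equiv_Cons)

end
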